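(* Let $\Omega\subset\mathbb{R}^d$ be a bounded Lipschitz domain, $\Gamma_D\subset\partial\Omega$ of positive surface measure, $\ell\ge1$, and let $(\cdot,\cdot)_\star$ be an inner product on $H^1_D(\Omega;\mathbb{R}^\ell)$ with induced norm $\|\cdot\|_\star$ satisfying $\|v\|\le c_\star^{1/2}\|v\|_\star$ for all $v\in H^1_D(\Omega;\mathbb{R}^\ell)$. Let $\tau>0$ and $u^0\in H^1(\Omega;\mathbb{R}^\ell)$ with $|u^0|^2=1$ a.e. in $\Omega$. Let $d_t u^1\in H^1_D(\Omega;\mathbb{R}^\ell)$ satisfy $d_t u^1\cdot u^0 = 0$ a.e. and \[ (d_t u^1, v)_\star + (\nabla[u^0+\tau d_t u^1],\nabla v) = 0 \] for all $v\in H^1_D(\Omega;\mathbb{R}^\ell)$ with $v\cdot u^0=0$ a.e., and set $u^1 = u^0+\tau d_t u^1$. Then, with a constant $c_G>0$ independent of $\tau$ and $u^0$: (a) $\|\nabla\mathcal U^1\|_G^2 \le c_G\|\nabla u^0\|^2$ and $\tau\|d_t u^1\|_\star^2\le \frac12\|\nabla u^0\|^2$; (b) $\big\||u^1|^2-1\big\|_{L^1} = \tau^2\|d_t u^1\|^2$.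
   Context: $H^1_D(\Omega;\mathbb{R}^\ell)$ is the space of $H^1$ vector fields whose traces vanish on $\Gamma_D$; $\|\cdot\|$ and $(\cdot,\cdot)$ denote the $L^2$ norm and inner product, $|\cdot|$ the Euclidean norm. $\mathcal U^1 = (u^1,u^0)$, and for a pair $(x,y)$ of functions, $\|\nabla(x,y)\|_G^2 = \frac54\|\nabla x\|^2 - (\nabla x,\nabla y) + \frac14\|\nabla y\|^2$ (i.e. the $L^2$-integrated version of $|(a,b)|_G^2 = \frac54|a|^2 - a\cdot b + \frac14|b|^2$). *)

theory Defs
  imports "HOL-Analysis.Analysis"
begin

definition lipschitz_domain :: "'a::euclidean_space set \<Rightarrow> bool" where
  "lipschitz_domain \<Omega> \<longleftrightarrow> open \<Omega> \<and> connected \<Omega> \<and> \<Omega> \<noteq> {} \<and>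
     (\<forall>x\<in>frontier \<Omega>. \<exists>r>0. \<exists>e. norm e = 1 \<and> (\<exists>g L. L-lipschitz_on UNIV g \<and>
        \<Omega> \<inter> ball x r = {y \<in> ball x r. y \<bullet> e < g (y - (y \<bullet> e) *\<^sub>R e)}))"

text \<open>Unnormalised s-dimensional Hausdorff measure (normalisation irrelevant for positivity).\<close>
definition hausdorff_pre :: "nat \<Rightarrow> real \<Rightarrow> 'a::metric_space set \<Rightarrow> ennreal" where
  "hausdorff_pre s \<delta> A =
     (INF C \<in> {C :: nat \<Rightarrow> 'a set. A \<subseteq> (\<Union>i. C i) \<and> (\<forall>i. bounded (C i) \<and> diameter (C i) \<le> \<delta>)}.
        (\<Sum>i. ennreal (if C i = {} then 0 else diameter (C i) ^ s)))"

definition hausdorff_measure :: "nat \<Rightarrow> 'a::metric_space set \<Rightarrow> ennreal" where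
  "hausdorff_measure s A = (SUP \<delta>\<in>{0<..}. hausdorff_pre s \<delta> A)"

definition surface_measure :: "'a::euclidean_space set \<Rightarrow> ennreal" where
  "surface_measure A = hausdorff_measure (DIM('a) - 1) A"

definition L2 :: "'a::euclidean_space set \<Rightarrow> ('a \<Rightarrow> 'b::euclidean_space) \<Rightarrow> bool" where
  "L2 \<Omega> f \<longleftrightarrow> f \<in> borel_measurable (lebesgue_on \<Omega>) \<and>
     integrable (lebesgue_on \<Omega>) (\<lambda>x. (norm (f x))\<^sup>2)"

definition l2inner :: "'a::euclidean_space set \<Rightarrow> ('a \<Rightarrow> 'b::euclidean_space) \<Rightarrow> ('a \<Rightarrow> 'b) \<Rightarrow> real" where
  "l2inner \<Omega> f g = integral\<^sup>L (lebesgue_on \<Omega>) (\<lambda>x. f x \<bullet> g x)"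

definition l2norm :: "'a::euclidean_space set \<Rightarrow> ('a \<Rightarrow> 'b::euclidean_space) \<Rightarrow> real" where
  "l2norm \<Omega> f = sqrt (l2inner \<Omega> f f)"

definition C1_with :: "('a::euclidean_space \<Rightarrow> 'b::real_normed_vector) \<Rightarrow> ('a \<Rightarrow> 'a \<Rightarrow> 'b) \<Rightarrow> bool" where
  "C1_with \<phi> D \<longleftrightarrow> (\<forall>x. (\<phi> has_derivative D x) (at x)) \<and> (\<forall>v. continuous_on UNIV (\<lambda>x. D x v))"

definition tsupp :: "('a::euclidean_space \<Rightarrow> 'b::real_normed_vector) \<Rightarrow> 'a set" where
  "tsupp \<phi> = closure {x. \<phi> x \<noteq> 0}"

definition weak_partial :: "'a::euclidean_space set \<Rightarrow> ('a \<Rightarrow> 'b::euclidean_space) \<Rightarrow> 'a \<Rightarrow> ('a \<Rightarrow> 'b) \<Rightarrow> bool" where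
  "weak_partial \<Omega> u b g \<longleftrightarrow>
     (\<forall>(\<phi>::'a \<Rightarrow> real) D. C1_with \<phi> D \<and> compact (tsupp \<phi>) \<and> tsupp \<phi> \<subseteq> \<Omega> \<longrightarrow>
        integral\<^sup>L (lebesgue_on \<Omega>) (\<lambda>x. D x b *\<^sub>R u x) = - integral\<^sup>L (lebesgue_on \<Omega>) (\<lambda>x. \<phi> x *\<^sub>R g x))"

definition H1 :: "'a::euclidean_space set \<Rightarrow> ('a \<Rightarrow> 'b::euclidean_space) \<Rightarrow> bool" where
  "H1 \<Omega> u \<longleftrightarrow> L2 \<Omega> u \<and> (\<forall>b\<in>Basis. \<exists>g. L2 \<Omega> g \<and> weak_partial \<Omega> u b g)"

text \<open>A (the, up to a.e. equality) weak partial derivative.\<close>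
definition wgrad :: "'a::euclidean_space set \<Rightarrow> ('a \<Rightarrow> 'b::euclidean_space) \<Rightarrow> 'a \<Rightarrow> ('a \<Rightarrow> 'b)" where
  "wgrad \<Omega> u b = (SOME g. L2 \<Omega> g \<and> weak_partial \<Omega> u b g)"

definition gradinner :: "'a::euclidean_space set \<Rightarrow> ('a \<Rightarrow> 'b::euclidean_space) \<Rightarrow> ('a \<Rightarrow> 'b) \<Rightarrow> real" where
  "gradinner \<Omega> u v = (\<Sum>b\<in>Basis. l2inner \<Omega> (wgrad \<Omega> u b) (wgrad \<Omega> v b))"

definition gradnorm2 :: "'a::euclidean_space set \<Rightarrow> ('a \<Rightarrow> 'b::euclidean_space) \<Rightarrow> real" where
  "gradnorm2 \<Omega> u = gradinner \<Omega> u u"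

definition h1norm :: "'a::euclidean_space set \<Rightarrow> ('a \<Rightarrow> 'b::euclidean_space) \<Rightarrow> real" where
  "h1norm \<Omega> u = sqrt ((l2norm \<Omega> u)\<^sup>2 + gradnorm2 \<Omega> u)"

definition CD :: "'a::euclidean_space set \<Rightarrow> ('a \<Rightarrow> 'b::euclidean_space) set" where
  "CD \<Gamma> = {\<phi>. (\<exists>D. C1_with \<phi> D) \<and> compact (tsupp \<phi>) \<and> tsupp \<phi> \<inter> closure \<Gamma> = {}}"

text \<open>H^1_D: H^1-closure of CD (functions with vanishing trace on Gamma_D).\<close>
definition H1D :: "'a::euclidean_space set \<Rightarrow> 'a set \<Rightarrow> ('a \<Rightarrow> 'b::euclidean_space) set" where
  "H1D \<Omega> \<Gamma> = {u. H1 \<Omega> u \<and> (\<exists>f. (\<forall>n. f n \<in> CD \<Gamma>) \<and>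
       (\<lambda>n. h1norm \<Omega> (\<lambda>x. f n x - u x)) \<longlonglongrightarrow> 0)}"

definition Gnorm2 :: "'a::euclidean_space set \<Rightarrow> ('a \<Rightarrow> 'b::euclidean_space) \<Rightarrow> ('a \<Rightarrow> 'b) \<Rightarrow> real" where
  "Gnorm2 \<Omega> x y = 5/4 * gradnorm2 \<Omega> x - gradinner \<Omega> x y + 1/4 * gradnorm2 \<Omega> y"

text \<open>Inner product on H^1_D (on equivalence classes modulo a.e. equality).\<close>
definition inner_product_on :: "'a::euclidean_space set \<Rightarrow> ('a \<Rightarrow> 'b::euclidean_space) set \<Rightarrow>
    (('a \<Rightarrow> 'b) \<Rightarrow> ('a \<Rightarrow> 'b) \<Rightarrow> real) \<Rightarrow> bool" where
  "inner_product_on \<Omega> V ip \<longleftrightarrow>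
     (\<forall>u\<in>V. \<forall>v\<in>V. ip u v = ip v u) \<and>
     (\<forall>u\<in>V. \<forall>w\<in>V. \<forall>v\<in>V. ip (\<lambda>x. u x + w x) v = ip u v + ip w v) \<and>
     (\<forall>u\<in>V. \<forall>v\<in>V. \<forall>c. ip (\<lambda>x. c *\<^sub>R u x) v = c * ip u v) \<and>
     (\<forall>u\<in>V. \<forall>u'\<in>V. \<forall>v\<in>V. (AE x in lebesgue_on \<Omega>. u x = u' x) \<longrightarrow> ip u v = ip u' v) \<and>
     (\<forall>v\<in>V. 0 \<le> ip v v) \<and>
     (\<forall>v\<in>V. ip v v = 0 \<longrightarrow> (AE x in lebesgue_on \<Omega>. v x = 0))"

end

theory Submission
  imports Defs
begin

(* Testing the Euler-Lagrange equation with v = d_t u^1 itself, which is admissible because it is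
   tangent to u^0, and expanding grad u^1 = grad u^0 + tau grad d_t u^1 bilinearly gives the
   discrete energy identity
     |grad u^1|^2 + 2 tau |d_t u^1|_*^2 + tau^2 |grad d_t u^1|^2 = |grad u^0|^2
   and likewise
     |grad (u^1, u^0)|_G^2 + 3/2 tau |d_t u^1|_*^2 + 1/4 tau^2 |grad d_t u^1|^2 = 1/2 |grad u^0|^2,
   so (a) holds with c_G = 1/2. Part (b) is pointwise: |u^1|^2 = 1 + tau^2 |d_t u^1|^2 a.e.
   because u^0 is a unit vector orthogonal to d_t u^1.
   The analytic input is that weak derivatives are unique up to null sets (the fundamental lemma
   of the calculus of variations, via C^1 bumps converging to indicators of boxes), which makes
   the chosen weak gradient wgrad linear almost everywhere. *)

lemma L2_integrable_inner:
  assumes "L2 \<Omega> f" "L2 \<Omega> g"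
  shows "integrable (lebesgue_on \<Omega>) (\<lambda>x. f x \<bullet> g x)"
proof (rule Bochner_Integration.integrable_bound)
  show "integrable (lebesgue_on \<Omega>) (\<lambda>x. (norm (f x))\<^sup>2 + (norm (g x))\<^sup>2)"
    using assms unfolding L2_def by simp
  show "(\<lambda>x. f x \<bullet> g x) \<in> borel_measurable (lebesgue_on \<Omega>)"
    using assms unfolding L2_def by (simp add: borel_measurable_inner)
  show "AE x in lebesgue_on \<Omega>. norm (f x \<bullet> g x) \<le> norm ((norm (f x))\<^sup>2 + (norm (g x))\<^sup>2)"
  proof (rule AE_I2)
    fix x
    have "\<bar>f x \<bullet> g x\<bar> \<le> norm (f x) * norm (g x)" by (rule Cauchy_Schwarz_ineq2)
    also have "\<dots> \<le> (norm (f x))\<^sup>2 + (norm (g x))\<^sup>2"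
      using sum_squares_bound[of "norm (f x)" "norm (g x)"]
        mult_nonneg_nonneg[OF norm_ge_zero norm_ge_zero, of "f x" "g x"]
      by linarith
    finally show "norm (f x \<bullet> g x) \<le> norm ((norm (f x))\<^sup>2 + (norm (g x))\<^sup>2)" by simp
  qed
qed

lemma L2_integrable_scaleR_bounded:
  fixes g :: "'a::euclidean_space \<Rightarrow> 'b::euclidean_space"
  assumes \<Omega>: "bounded \<Omega>" "\<Omega> \<in> sets lebesgue" and g: "L2 \<Omega> g"
    and c: "c \<in> borel_measurable (lebesgue_on \<Omega>)" "\<And>x. \<bar>c x\<bar> \<le> B"
  shows "integrable (lebesgue_on \<Omega>) (\<lambda>x. c x *\<^sub>R g x)"
proof -
  interpret finite_measure "lebesgue_on \<Omega>"
    using \<Omega> by (intro finite_measure_lebesgue_on bounded_set_imp_lmeasurable)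
  have B: "0 \<le> B" using order_trans[OF abs_ge_zero c(2)] .
  show ?thesis
  proof (rule Bochner_Integration.integrable_bound)
    show "integrable (lebesgue_on \<Omega>) (\<lambda>x. B * (1 + (norm (g x))\<^sup>2))"
      using g unfolding L2_def by simp
    show "(\<lambda>x. c x *\<^sub>R g x) \<in> borel_measurable (lebesgue_on \<Omega>)"
      using g c unfolding L2_def by (simp add: borel_measurable_scaleR)
    show "AE x in lebesgue_on \<Omega>. norm (c x *\<^sub>R g x) \<le> norm (B * (1 + (norm (g x))\<^sup>2))"
    proof (rule AE_I2)
      fix x
      have "2 * norm (g x) \<le> (norm (g x))\<^sup>2 + 1"
        using sum_squares_bound[of "norm (g x)" 1] by simp
      then have "norm (g x) \<le> 1 + (norm (g x))\<^sup>2"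
        using norm_ge_zero[of "g x"] by linarith
      then have "\<bar>c x\<bar> * norm (g x) \<le> B * (1 + (norm (g x))\<^sup>2)"
        using c(2)[of x] by (intro mult_mono) auto
      moreover have "norm (B * (1 + (norm (g x))\<^sup>2)) = B * (1 + (norm (g x))\<^sup>2)"
        using B by simp
      ultimately show "norm (c x *\<^sub>R g x) \<le> norm (B * (1 + (norm (g x))\<^sup>2))"
        by simp
    qed
  qed
qed

lemma L2_add_scaleR:
  fixes u w :: "'a::euclidean_space \<Rightarrow> 'b::euclidean_space"
  assumes "L2 \<Omega> u" "L2 \<Omega> w"
  shows "L2 \<Omega> (\<lambda>x. u x + c *\<^sub>R w x)"
  unfolding L2_def
proof
  show meas: "(\<lambda>x. u x + c *\<^sub>R w x) \<in> borel_measurable (lebesgue_on \<Omega>)"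
    using assms unfolding L2_def by (simp add: borel_measurable_add borel_measurable_scaleR)
  show "integrable (lebesgue_on \<Omega>) (\<lambda>x. (norm (u x + c *\<^sub>R w x))\<^sup>2)"
  proof (rule Bochner_Integration.integrable_bound)
    show "integrable (lebesgue_on \<Omega>) (\<lambda>x. 2 * (norm (u x))\<^sup>2 + 2 * (c\<^sup>2 * (norm (w x))\<^sup>2))"
      using assms unfolding L2_def by simp
    show "(\<lambda>x. (norm (u x + c *\<^sub>R w x))\<^sup>2) \<in> borel_measurable (lebesgue_on \<Omega>)"
      using meas by (intro borel_measurable_power borel_measurable_norm) simp_all
    show "AE x in lebesgue_on \<Omega>. norm ((norm (u x + c *\<^sub>R w x))\<^sup>2) \<le>
        norm (2 * (norm (u x))\<^sup>2 + 2 * (c\<^sup>2 * (norm (w x))\<^sup>2))"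
    proof (rule AE_I2)
      fix x
      have "(norm (u x + c *\<^sub>R w x))\<^sup>2 \<le> (norm (u x) + \<bar>c\<bar> * norm (w x))\<^sup>2"
        using norm_triangle_ineq[of "u x" "c *\<^sub>R w x"] by (intro power_mono) auto
      also have "\<dots> \<le> 2 * (norm (u x))\<^sup>2 + 2 * (c\<^sup>2 * (norm (w x))\<^sup>2)"
        using sum_squares_bound[of "norm (u x)" "\<bar>c\<bar> * norm (w x)"]
        by (simp add: power2_sum power_mult_distrib)
      finally show "norm ((norm (u x + c *\<^sub>R w x))\<^sup>2) \<le>
          norm (2 * (norm (u x))\<^sup>2 + 2 * (c\<^sup>2 * (norm (w x))\<^sup>2))" by simp
    qed
  qed
qed

lemma l2inner_commute: "l2inner \<Omega> f g = l2inner \<Omega> g f"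
  unfolding l2inner_def by (simp add: inner_commute)

lemma l2inner_self_nonneg: "0 \<le> l2inner \<Omega> f f"
  unfolding l2inner_def by (rule integral_nonneg_AE) simp

lemma l2inner_add_scaleR_left:
  assumes "L2 \<Omega> f" "L2 \<Omega> g" "L2 \<Omega> v"
  shows "l2inner \<Omega> (\<lambda>x. f x + c *\<^sub>R g x) v = l2inner \<Omega> f v + c * l2inner \<Omega> g v"
  using L2_integrable_inner[OF assms(1,3)] L2_integrable_inner[OF assms(2,3)]
  unfolding l2inner_def by (simp add: inner_add_left)

lemma l2inner_cong_AE_left:
  assumes "L2 \<Omega> f" "L2 \<Omega> f'" "L2 \<Omega> v" "AE x in lebesgue_on \<Omega>. f x = f' x"
  shows "l2inner \<Omega> f v = l2inner \<Omega> f' v"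
  unfolding l2inner_def
proof (rule integral_cong_AE)
  show "(\<lambda>x. f x \<bullet> v x) \<in> borel_measurable (lebesgue_on \<Omega>)"
    "(\<lambda>x. f' x \<bullet> v x) \<in> borel_measurable (lebesgue_on \<Omega>)"
    using assms unfolding L2_def by (simp_all add: borel_measurable_inner)
  show "AE x in lebesgue_on \<Omega>. f x \<bullet> v x = f' x \<bullet> v x"
    using assms(4) by (rule AE_mp) (intro AE_I2, simp)
qed

lemma notin_tsupp_imp_eq_0: "x \<notin> tsupp \<phi> \<Longrightarrow> \<phi> x = 0"
  unfolding tsupp_def using closure_subset[of "{x. \<phi> x \<noteq> 0}"] by auto

lemma C1_with_continuous_on: "C1_with \<phi> D \<Longrightarrow> continuous_on S \<phi>"
  unfolding C1_with_def
  by (intro continuous_at_imp_continuous_on ballI) (auto intro: has_derivative_continuous)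

lemma C1_with_deriv_eq_0_outside_tsupp:
  assumes "C1_with \<phi> D" "x \<notin> tsupp \<phi>"
  shows "D x v = 0"
proof -
  have op: "open (- tsupp \<phi>)" unfolding tsupp_def by auto
  have "((\<lambda>_. 0) has_derivative (\<lambda>_. 0)) (at x)" by simp
  then have "(\<phi> has_derivative (\<lambda>_. 0)) (at x)"
    by (rule has_derivative_transform_within_open[OF _ op]) (use assms notin_tsupp_imp_eq_0 in auto)
  moreover have "(\<phi> has_derivative D x) (at x)" using assms(1) unfolding C1_with_def by auto
  ultimately have "D x = (\<lambda>_. 0)" using has_derivative_unique by blast
  then show ?thesis by simp
qed

lemma continuous_vanishing_outside_compact_bounded:
  fixes f :: "'a::topological_space \<Rightarrow> 'b::real_normed_vector"
  assumes "continuous_on UNIV f" "compact K" "\<And>x. x \<notin> K \<Longrightarrow> f x = 0"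
  obtains B where "\<And>x. norm (f x) \<le> B"
proof -
  have "continuous_on K f" using assms(1) by (rule continuous_on_subset) simp
  then have "bounded (f ` K)" using assms(2) by (intro compact_imp_bounded compact_continuous_image)
  then obtain B where B: "\<forall>y\<in>f ` K. norm y \<le> B" unfolding bounded_iff by blast
  have "norm (f x) \<le> max B 0" for x
  proof (cases "x \<in> K")
    case True then show ?thesis using B by fastforce
  next
    case False then show ?thesis using assms(3)[of x] by simp
  qed
  then show ?thesis using that by blast
qed

lemma integrable_test_function_scaleR_L2:
  fixes g :: "'a::euclidean_space \<Rightarrow> 'b::euclidean_space"
  assumes \<Omega>: "open \<Omega>" "bounded \<Omega>" and \<phi>: "C1_with \<phi> D" "compact (tsupp \<phi>)" and g: "L2 \<Omega> g"
  shows "integrable (lebesgue_on \<Omega>) (\<lambda>x. \<phi> x *\<^sub>R g x)"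
    and "integrable (lebesgue_on \<Omega>) (\<lambda>x. D x v *\<^sub>R g x)"
proof -
  have \<Omega>_sets: "\<Omega> \<in> sets lebesgue" using \<Omega>(1) by (simp add: borel_open)
  have cont_\<phi>: "continuous_on S \<phi>" for S
    using \<phi>(1) by (rule C1_with_continuous_on)
  have cont_D: "continuous_on S (\<lambda>x. D x v)" for S
    using \<phi>(1) unfolding C1_with_def by (metis continuous_on_subset subset_UNIV)
  obtain B where "\<And>x. norm (\<phi> x) \<le> B"
    using continuous_vanishing_outside_compact_bounded[OF cont_\<phi> \<phi>(2) notin_tsupp_imp_eq_0[of _ \<phi>]]
    by blast
  then have "\<And>x. \<bar>\<phi> x\<bar> \<le> B" by simp
  with \<Omega>(2) \<Omega>_sets g continuous_imp_measurable_on_sets_lebesgue[OF cont_\<phi> \<Omega>_sets]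
  show "integrable (lebesgue_on \<Omega>) (\<lambda>x. \<phi> x *\<^sub>R g x)"
    by (rule L2_integrable_scaleR_bounded)
  obtain B' where "\<And>x. norm (D x v) \<le> B'"
    using continuous_vanishing_outside_compact_bounded[OF cont_D \<phi>(2)]
      C1_with_deriv_eq_0_outside_tsupp[OF \<phi>(1)] by blast
  then have "\<And>x. \<bar>D x v\<bar> \<le> B'" by simp
  with \<Omega>(2) \<Omega>_sets g continuous_imp_measurable_on_sets_lebesgue[OF cont_D \<Omega>_sets]
  show "integrable (lebesgue_on \<Omega>) (\<lambda>x. D x v *\<^sub>R g x)"
    by (rule L2_integrable_scaleR_bounded)
qed

section \<open>Smooth bumps approximating boxes\<close>

definition ramp_sq :: "real \<Rightarrow> real" where
  "ramp_sq t = (if t \<le> 0 then 0 else t\<^sup>2)"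

lemma ramp_sq_has_real_derivative: "(ramp_sq has_real_derivative 2 * max 0 t) (at t)"
proof (cases "t = 0")
  case True
  have "((\<lambda>h. (ramp_sq (0 + h) - ramp_sq 0) / h) \<longlongrightarrow> 0) (at 0)"
  proof (rule Lim_null_comparison)
    show "\<forall>\<^sub>F h in at 0. norm ((ramp_sq (0 + h) - ramp_sq 0) / h) \<le> \<bar>h\<bar>"
      by (intro always_eventually allI) (auto simp: ramp_sq_def power2_eq_square abs_mult)
    show "((\<lambda>h. \<bar>h\<bar>) \<longlongrightarrow> (0::real)) (at 0)"
      using tendsto_rabs[OF tendsto_ident_at[of "0::real" UNIV]] by simp
  qed
  then show ?thesis using True by (simp add: DERIV_def)
next
  case False
  then consider "t < 0" | "t > 0" by linarith
  then show ?thesis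
  proof cases
    case 1
    have "((\<lambda>_. 0) has_real_derivative 2 * max 0 t) (at t)" using 1 by simp
    then show ?thesis
      by (rule has_field_derivative_transform_within_open[where S="{..<0}"])
        (use 1 in \<open>auto simp: ramp_sq_def\<close>)
  next
    case 2
    have "((\<lambda>x. x\<^sup>2) has_real_derivative 2 * max 0 t) (at t)"
      using 2 by (auto intro!: derivative_eq_intros)
    then show ?thesis
      by (rule has_field_derivative_transform_within_open[where S="{0<..}"])
        (use 2 in \<open>auto simp: ramp_sq_def\<close>)
  qed
qed

text \<open>The second difference of \<open>ramp_sq\<close>: a piecewise quadratic whose derivative is the hat
  function on \<open>[0, 2]\<close>, hence a \<open>C\<^sup>1\<close> step from 0 to 1.\<close>

definition smooth_step :: "real \<Rightarrow> real" where
  "smooth_step t = (ramp_sq t - 2 * ramp_sq (t - 1) + ramp_sq (t - 2)) / 2"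

definition smooth_step' :: "real \<Rightarrow> real" where
  "smooth_step' t = max 0 t - 2 * max 0 (t - 1) + max 0 (t - 2)"

lemma smooth_step_has_real_derivative: "(smooth_step has_real_derivative smooth_step' t) (at t)"
proof -
  have "((\<lambda>t. ramp_sq (t - c)) has_real_derivative 2 * max 0 (t - c) * 1) (at t)" for c
    by (rule DERIV_chain2[OF ramp_sq_has_real_derivative]) (auto intro!: derivative_eq_intros)
  then have shifted: "((\<lambda>t. ramp_sq (t - c)) has_real_derivative 2 * max 0 (t - c)) (at t)" for c
    by simp
  show ?thesis
    unfolding smooth_step_def[abs_def] smooth_step'_def
    using shifted[of 0] shifted[of 1] shifted[of 2]
    by (auto intro!: derivative_eq_intros)
qed

lemma continuous_on_smooth_step': "continuous_on S smooth_step'"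
  unfolding smooth_step'_def by (intro continuous_intros)

lemma continuous_on_smooth_step: "continuous_on S smooth_step"
  by (intro continuous_at_imp_continuous_on ballI DERIV_isCont[OF smooth_step_has_real_derivative])

lemma smooth_step_eq_0: "t \<le> 0 \<Longrightarrow> smooth_step t = 0"
  by (simp add: smooth_step_def ramp_sq_def)

lemma smooth_step_eq_1: "t \<ge> 2 \<Longrightarrow> smooth_step t = 1"
  by (simp add: smooth_step_def ramp_sq_def power2_eq_square algebra_simps)

lemma smooth_step_nonzero_imp_pos: "smooth_step t \<noteq> 0 \<Longrightarrow> t > 0"
  by (cases "t \<le> 0") (auto simp: smooth_step_eq_0)

lemma smooth_step_bounds: "0 \<le> smooth_step t" "smooth_step t \<le> 1"
proof -
  consider "t \<le> 0" | "0 < t" "t \<le> 1" | "1 < t" "t \<le> 2" | "t > 2" by linarith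
  then have "0 \<le> smooth_step t \<and> smooth_step t \<le> 1"
  proof cases
    case 2
    then have "smooth_step t = t\<^sup>2 / 2" by (simp add: smooth_step_def ramp_sq_def)
    moreover have "t\<^sup>2 \<le> 1" using 2 by (simp add: power_le_one)
    ultimately show ?thesis using zero_le_power2[of t] by linarith
  next
    case 3
    then have "smooth_step t = 1 - (2 - t)\<^sup>2 / 2"
      by (simp add: smooth_step_def ramp_sq_def power2_eq_square field_simps)
    moreover have "(2 - t)\<^sup>2 \<le> 1" using 3 by (simp add: abs_square_le_1)
    ultimately show ?thesis using zero_le_power2[of "2 - t"] by linarith
  qed (simp_all add: smooth_step_eq_0 smooth_step_eq_1)
  then show "0 \<le> smooth_step t" "smooth_step t \<le> 1" by auto
qed

lemma smooth_step_has_derivative[derivative_intros]: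
  "(g has_derivative g') (at x within S) \<Longrightarrow>
    ((\<lambda>x. smooth_step (g x)) has_derivative (\<lambda>v. g' v * smooth_step' (g x))) (at x within S)"
  by (rule DERIV_compose_FDERIV[OF smooth_step_has_real_derivative])

lemma continuous_on_smooth_step_compose[continuous_intros]:
  "continuous_on S f \<Longrightarrow> continuous_on S (\<lambda>x. smooth_step (f x))"
  by (rule continuous_on_compose2[OF continuous_on_smooth_step[of UNIV]]) auto

lemma continuous_on_smooth_step'_compose[continuous_intros]:
  "continuous_on S f \<Longrightarrow> continuous_on S (\<lambda>x. smooth_step' (f x))"
  by (rule continuous_on_compose2[OF continuous_on_smooth_step'[of UNIV]]) auto

definition box_bump_factor :: "'a::euclidean_space \<Rightarrow> 'a \<Rightarrow> real \<Rightarrow> 'a \<Rightarrow> 'a \<Rightarrow> real" where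
  "box_bump_factor a b n i x = smooth_step (n * (x \<bullet> i - a \<bullet> i)) * smooth_step (n * (b \<bullet> i - x \<bullet> i))"

definition box_bump_factor' :: "'a::euclidean_space \<Rightarrow> 'a \<Rightarrow> real \<Rightarrow> 'a \<Rightarrow> 'a \<Rightarrow> 'a \<Rightarrow> real" where
  "box_bump_factor' a b n i x v =
     n * (v \<bullet> i) * (smooth_step' (n * (x \<bullet> i - a \<bullet> i)) * smooth_step (n * (b \<bullet> i - x \<bullet> i))
       - smooth_step (n * (x \<bullet> i - a \<bullet> i)) * smooth_step' (n * (b \<bullet> i - x \<bullet> i)))"

definition box_bump :: "'a::euclidean_space \<Rightarrow> 'a \<Rightarrow> real \<Rightarrow> 'a \<Rightarrow> real" where
  "box_bump a b n x = (\<Prod>i\<in>Basis. box_bump_factor a b n i x)"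

definition box_bump' :: "'a::euclidean_space \<Rightarrow> 'a \<Rightarrow> real \<Rightarrow> 'a \<Rightarrow> 'a \<Rightarrow> real" where
  "box_bump' a b n x v =
     (\<Sum>i\<in>Basis. box_bump_factor' a b n i x v * (\<Prod>j\<in>Basis - {i}. box_bump_factor a b n j x))"

lemma box_bump_factor_has_derivative:
  "(box_bump_factor a b n i has_derivative box_bump_factor' a b n i x) (at x)"
  unfolding box_bump_factor_def[abs_def]
  by (rule derivative_eq_intros refl | simp add: box_bump_factor'_def fun_eq_iff algebra_simps)+

lemma C1_with_box_bump: "C1_with (box_bump a b n) (box_bump' a b n)"
  unfolding C1_with_def
proof (intro conjI allI)
  show "(box_bump a b n has_derivative box_bump' a b n x) (at x)" for x
    unfolding box_bump_def[abs_def] box_bump'_def[abs_def]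
    by (rule has_derivative_prod) (rule box_bump_factor_has_derivative)
  show "continuous_on UNIV (\<lambda>x. box_bump' a b n x v)" for v
    unfolding box_bump'_def box_bump_factor'_def box_bump_factor_def
    by (intro continuous_intros)
qed

lemma box_bump_nonzero_imp_mem_box: "n > 0 \<Longrightarrow> box_bump a b n x \<noteq> 0 \<Longrightarrow> x \<in> box a b"
  unfolding box_bump_def box_bump_factor_def mem_box
  by (auto dest!: smooth_step_nonzero_imp_pos simp: zero_less_mult_iff)

lemma box_bump_bounds: "0 \<le> box_bump a b n x" "box_bump a b n x \<le> 1"
  unfolding box_bump_def box_bump_factor_def
  by (auto intro!: prod_nonneg prod_le_1 mult_le_one simp: smooth_step_bounds)

lemma tsupp_box_bump:
  assumes "n > 0"
  shows "tsupp (box_bump a b n) \<subseteq> closure (box a b)" "compact (tsupp (box_bump a b n))"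
proof -
  have "{x. box_bump a b n x \<noteq> 0} \<subseteq> box a b"
    using box_bump_nonzero_imp_mem_box[OF assms] by blast
  then show sub: "tsupp (box_bump a b n) \<subseteq> closure (box a b)"
    unfolding tsupp_def by (rule closure_mono)
  show "compact (tsupp (box_bump a b n))"
    using bounded_subset[OF bounded_closure[OF bounded_box] sub]
    by (simp add: compact_eq_bounded_closed tsupp_def)
qed

lemma box_bump_tendsto_indicator:
  "(\<lambda>k. box_bump a b (real (Suc k)) x) \<longlonglongrightarrow> indicator (box a b) x"
proof (cases "x \<in> box a b")
  case True
  have "\<forall>\<^sub>F k in sequentially. 2 \<le> real (Suc k) * (x \<bullet> i - a \<bullet> i) \<and> 2 \<le> real (Suc k) * (b \<bullet> i - x \<bullet> i)"
    if i: "i \<in> Basis" for i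
  proof -
    have pos: "0 < x \<bullet> i - a \<bullet> i" "0 < b \<bullet> i - x \<bullet> i" using True i by (auto simp: mem_box)
    have lim: "filterlim (\<lambda>k. real (Suc k)) at_top sequentially"
      by (rule filterlim_compose[OF filterlim_real_sequentially filterlim_Suc])
    have "filterlim (\<lambda>k. (x \<bullet> i - a \<bullet> i) * real (Suc k)) at_top sequentially"
        "filterlim (\<lambda>k. (b \<bullet> i - x \<bullet> i) * real (Suc k)) at_top sequentially"
      by (rule filterlim_tendsto_pos_mult_at_top[OF tendsto_const pos(1) lim],
          rule filterlim_tendsto_pos_mult_at_top[OF tendsto_const pos(2) lim])
    then show ?thesis
      unfolding filterlim_at_top by (auto intro: eventually_conj simp: mult.commute)
  qed
  then have "\<forall>\<^sub>F k in sequentially. \<forall>i\<in>Basis.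
      2 \<le> real (Suc k) * (x \<bullet> i - a \<bullet> i) \<and> 2 \<le> real (Suc k) * (b \<bullet> i - x \<bullet> i)"
    by (simp add: eventually_ball_finite_distrib)
  then have "\<forall>\<^sub>F k in sequentially. box_bump a b (real (Suc k)) x = 1"
    by eventually_elim (simp add: box_bump_def box_bump_factor_def smooth_step_eq_1)
  then show ?thesis using True by (simp add: tendsto_eventually)
next
  case False
  then have "box_bump a b (real (Suc k)) x = 0" for k
    using box_bump_nonzero_imp_mem_box[of "real (Suc k)" a b x] by auto
  then show ?thesis using False by simp
qed

section \<open>The fundamental lemma of the calculus of variations\<close>

lemma integral_indicator_box_eq_0_if_orthogonal_to_test_functions:
  fixes f :: "'a::euclidean_space \<Rightarrow> real"
  assumes \<Omega>: "open \<Omega>" and f: "integrable (lebesgue_on \<Omega>) f"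
    and orth: "\<And>\<phi> D. C1_with \<phi> D \<Longrightarrow> compact (tsupp \<phi>) \<Longrightarrow> tsupp \<phi> \<subseteq> \<Omega> \<Longrightarrow>
                 integral\<^sup>L (lebesgue_on \<Omega>) (\<lambda>x. \<phi> x * f x) = 0"
    and box: "closure (box a b) \<subseteq> \<Omega>"
  shows "integral\<^sup>L (lebesgue_on \<Omega>) (\<lambda>x. indicator (box a b) x * f x) = 0"
proof -
  let ?s = "\<lambda>k x. box_bump a b (real (Suc k)) x * f x"
  have \<Omega>_sets: "\<Omega> \<in> sets lebesgue" using \<Omega> by (simp add: borel_open)
  have f_meas: "f \<in> borel_measurable (lebesgue_on \<Omega>)" using f by (rule borel_measurable_integrable)
  have "(\<lambda>k. integral\<^sup>L (lebesgue_on \<Omega>) (?s k))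
      \<longlonglongrightarrow> integral\<^sup>L (lebesgue_on \<Omega>) (\<lambda>x. indicator (box a b) x * f x)"
  proof (rule integral_dominated_convergence[where w="\<lambda>x. \<bar>f x\<bar>"])
    have "indicator (box a b) \<in> borel_measurable lebesgue"
      by (intro borel_measurable_indicator) (simp add: borel_open)
    then have "indicator (box a b) \<in> borel_measurable (lebesgue_on \<Omega>)"
      by (rule measurable_restrict_space1)
    then show "(\<lambda>x. indicator (box a b) x * f x) \<in> borel_measurable (lebesgue_on \<Omega>)"
      using f_meas by (rule borel_measurable_times)
    show "?s k \<in> borel_measurable (lebesgue_on \<Omega>)" for k
    proof -
      have "box_bump a b (real (Suc k)) \<in> borel_measurable (lebesgue_on \<Omega>)"
        using C1_with_continuous_on[OF C1_with_box_bump] \<Omega>_sets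
        by (rule continuous_imp_measurable_on_sets_lebesgue)
      then show ?thesis using f_meas by (rule borel_measurable_times)
    qed
    show "integrable (lebesgue_on \<Omega>) (\<lambda>x. \<bar>f x\<bar>)" using f by (rule integrable_abs)
    show "AE x in lebesgue_on \<Omega>. (\<lambda>k. ?s k x) \<longlonglongrightarrow> indicator (box a b) x * f x"
      by (intro AE_I2 tendsto_mult_right box_bump_tendsto_indicator)
    show "AE x in lebesgue_on \<Omega>. norm (?s k x) \<le> \<bar>f x\<bar>" for k
    proof (rule AE_I2)
      fix x
      have "\<bar>box_bump a b (real (Suc k)) x\<bar> * \<bar>f x\<bar> \<le> 1 * \<bar>f x\<bar>"
        using box_bump_bounds[of a b "real (Suc k)" x] by (intro mult_right_mono) auto
      then show "norm (?s k x) \<le> \<bar>f x\<bar>" by (simp add: abs_mult)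
    qed
  qed
  moreover have "integral\<^sup>L (lebesgue_on \<Omega>) (?s k) = 0" for k
    using tsupp_box_bump[of "real (Suc k)" a b] box by (intro orth[OF C1_with_box_bump]) auto
  ultimately show ?thesis by (simp add: LIMSEQ_const_iff)
qed

lemma emeasure_density_integrable:
  fixes h :: "'a::euclidean_space \<Rightarrow> real"
  assumes h: "integrable lborel h" "\<And>x. 0 \<le> h x" and X: "X \<in> sets borel"
  shows "emeasure (density lborel (\<lambda>x. ennreal (h x))) X = ennreal (\<integral>x. indicator X x * h x \<partial>lborel)"
proof -
  have "emeasure (density lborel (\<lambda>x. ennreal (h x))) X
      = (\<integral>\<^sup>+ x. ennreal (h x) * indicator X x \<partial>lborel)"
    using borel_measurable_integrable[OF h(1)] X by (intro emeasure_density) auto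
  also have "\<dots> = (\<integral>\<^sup>+ x. ennreal (indicator X x * h x) \<partial>lborel)"
    by (intro nn_integral_cong) (simp split: split_indicator)
  also have "\<dots> = ennreal (\<integral>x. indicator X x * h x \<partial>lborel)"
    using integrable_mult_indicator[OF _ h(1), of X] X h(2)
    by (intro nn_integral_eq_integral) (auto split: split_indicator)
  finally show ?thesis .
qed

text \<open>\<open>h\<close> and \<open>h'\<close> are densities of finite measures that agree on the \<open>\<inter>\<close>-stable generator of
  boxes, hence everywhere.\<close>

lemma AE_eq_if_box_integrals_eq:
  fixes h h' :: "'a::euclidean_space \<Rightarrow> real"
  assumes int: "integrable lborel h" "integrable lborel h'" and nonneg: "\<And>x. 0 \<le> h x" "\<And>x. 0 \<le> h' x"
    and box_integrals: "\<And>c d. (\<integral>x. indicator (box c d) x * h x \<partial>lborel)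
      = (\<integral>x. indicator (box c d) x * h' x \<partial>lborel)"
  shows "AE x in lborel. h x = h' x"
proof -
  have "density lborel h = density lborel h'"
  proof (rule measure_eqI_generator_eq[where E="range (\<lambda>(c, d). box c d)" and \<Omega>=UNIV
        and A="\<lambda>i. box (- (real i *\<^sub>R One)) (real i *\<^sub>R One)"])
    show "Int_stable (range (\<lambda>(c, d). box c d :: 'a set))"
      by (auto simp: Int_stable_def box_Int_box)
    show "sets (density lborel h) = sigma_sets UNIV (range (\<lambda>(c, d). box c d))"
      "sets (density lborel h') = sigma_sets UNIV (range (\<lambda>(c, d). box c d))"
      by (simp_all add: borel_eq_box)
    show "(\<Union>i. box (- (real i *\<^sub>R One)) (real i *\<^sub>R One) :: 'a set) = UNIV"
      by (rule UN_box_eq_UNIV)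
    show "emeasure (density lborel h) (box (- (real i *\<^sub>R One)) (real i *\<^sub>R One)) \<noteq> \<infinity>" for i
      by (subst emeasure_density_integrable[OF int(1) nonneg(1)]) auto
    show "emeasure (density lborel h) X = emeasure (density lborel h') X"
      if "X \<in> range (\<lambda>(c, d). box c d)" for X
      using that emeasure_density_integrable[OF int(1) nonneg(1)]
        emeasure_density_integrable[OF int(2) nonneg(2)]
      by (auto simp: box_integrals)
  qed auto
  then have "AE x in lborel. ennreal (h x) = ennreal (h' x)"
  proof (subst (asm) finite_density_unique)
    show "(\<lambda>x. ennreal (h x)) \<in> borel_measurable lborel" "(\<lambda>x. ennreal (h' x)) \<in> borel_measurable lborel"
      using int by (auto intro: measurable_compose[OF borel_measurable_integrable])
    show "integral\<^sup>N lborel (\<lambda>x. ennreal (h x)) \<noteq> \<infinity>"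
      using nn_integral_eq_integral[OF int(1)] nonneg by simp
  qed auto
  then show ?thesis
    by (rule AE_mp) (intro AE_I2, simp add: nonneg)
qed

lemma AE_eq_0_on_if_box_integrals_eq_0:
  fixes g :: "'a::euclidean_space \<Rightarrow> real"
  assumes g: "integrable lborel g" and B: "B \<in> sets borel"
    and box_integrals: "\<And>c d. (\<integral>x. indicator (box c d \<inter> B) x * g x \<partial>lborel) = 0"
  shows "AE x in lborel. x \<in> B \<longrightarrow> g x = 0"
proof -
  define gp where "gp x = indicator B x * max 0 (g x)" for x
  define gn where "gn x = indicator B x * max 0 (- g x)" for x
  have int_gp: "integrable lborel gp"
    unfolding gp_def using integrable_mult_indicator[of B lborel "\<lambda>x. max 0 (g x)"] g B by simp
  have int_gn: "integrable lborel gn"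
    unfolding gn_def using integrable_mult_indicator[of B lborel "\<lambda>x. max 0 (- g x)"] g B by simp
  have "AE x in lborel. gp x = gn x"
  proof (rule AE_eq_if_box_integrals_eq[OF int_gp int_gn])
    fix c d
    let ?X = "box c d :: 'a set"
    have "(\<integral>x. indicator ?X x * gp x \<partial>lborel) - (\<integral>x. indicator ?X x * gn x \<partial>lborel)
        = (\<integral>x. indicator ?X x * gp x - indicator ?X x * gn x \<partial>lborel)"
      using integrable_mult_indicator[OF _ int_gp, of ?X] integrable_mult_indicator[OF _ int_gn, of ?X]
      by simp
    also have "\<dots> = (\<integral>x. indicator (box c d \<inter> B) x * g x \<partial>lborel)"
      by (intro Bochner_Integration.integral_cong) (auto simp: gp_def gn_def split: split_indicator)
    finally show "(\<integral>x. indicator ?X x * gp x \<partial>lborel) = (\<integral>x. indicator ?X x * gn x \<partial>lborel)"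
      by (simp add: box_integrals)
  qed (auto simp: gp_def gn_def)
  then show ?thesis
    by (rule AE_mp) (intro AE_I2, auto simp: gp_def gn_def max_def split: if_splits)
qed

lemma open_rational_box_cover:
  fixes \<Omega> :: "'a::euclidean_space set"
  assumes "open \<Omega>" "x \<in> \<Omega>"
  obtains p where "p \<in> Basis \<rightarrow>\<^sub>E \<rat> \<times> \<rat>"
    "closure (box (\<Sum>i\<in>Basis. fst (p i) *\<^sub>R i) (\<Sum>i\<in>Basis. snd (p i) *\<^sub>R i)) \<subseteq> \<Omega>"
    "x \<in> box (\<Sum>i\<in>Basis. fst (p i) *\<^sub>R i) (\<Sum>i\<in>Basis. snd (p i) *\<^sub>R i)"
proof -
  obtain e where e: "e > 0" "ball x e \<subseteq> \<Omega>" using assms openE by blast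
  have "x \<in> ball x (e/2)" using e by simp
  also have "ball x (e/2) = (\<Union>p\<in>{p \<in> Basis \<rightarrow>\<^sub>E \<rat> \<times> \<rat>.
      box (\<Sum>i\<in>Basis. fst (p i) *\<^sub>R i) (\<Sum>i\<in>Basis. snd (p i) *\<^sub>R i) \<subseteq> ball x (e/2)}.
        box (\<Sum>i\<in>Basis. fst (p i) *\<^sub>R i) (\<Sum>i\<in>Basis. snd (p i) *\<^sub>R i))"
    by (rule open_UNION_box) simp
  finally obtain p where p: "p \<in> Basis \<rightarrow>\<^sub>E \<rat> \<times> \<rat>"
      "box (\<Sum>i\<in>Basis. fst (p i) *\<^sub>R i) (\<Sum>i\<in>Basis. snd (p i) *\<^sub>R i) \<subseteq> ball x (e/2)"
      "x \<in> box (\<Sum>i\<in>Basis. fst (p i) *\<^sub>R i) (\<Sum>i\<in>Basis. snd (p i) *\<^sub>R i)"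
    by auto
  have "closure (box (\<Sum>i\<in>Basis. fst (p i) *\<^sub>R i) (\<Sum>i\<in>Basis. snd (p i) *\<^sub>R i)) \<subseteq> cball x (e/2)"
    using closure_mono[OF p(2)] e by simp
  also have "\<dots> \<subseteq> \<Omega>" using e by (auto simp: subset_eq)
  finally show ?thesis using that p(1,3) by blast
qed

lemma integrable_lebesgue_borel_representative:
  fixes F :: "'a::euclidean_space \<Rightarrow> real"
  assumes F: "integrable lebesgue F"
  obtains g where "integrable lborel g" "AE x in lebesgue. F x = g x"
    "\<And>S. S \<in> sets borel \<Longrightarrow> (\<integral>x. indicator S x * g x \<partial>lborel) = (\<integral>x. indicator S x * F x \<partial>lebesgue)"
proof -
  have "F \<in> borel_measurable (completion lborel)" using F by (rule borel_measurable_integrable)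
  then obtain g where g_meas: "g \<in> borel_measurable lborel" and "AE x in lborel. F x = g x"
    using completion_ex_borel_measurable_real by blast
  from this(2) have Fg: "AE x in lebesgue. F x = g x" by (rule AE_completion)
  have "integrable lebesgue g"
    using integrable_cong_AE[OF borel_measurable_integrable[OF F] measurable_completion[OF g_meas] Fg] F
    by simp
  then have g: "integrable lborel g" using integrable_completion[OF g_meas] by simp
  have "(\<integral>x. indicator S x * g x \<partial>lborel) = (\<integral>x. indicator S x * F x \<partial>lebesgue)"
    if S: "S \<in> sets borel" for S
  proof -
    have meas: "(\<lambda>x. indicator S x * g x) \<in> borel_measurable lborel" using S g_meas by simp
    have "(\<integral>x. indicator S x * g x \<partial>lborel) = (\<integral>x. indicator S x * g x \<partial>lebesgue)"
      using integral_completion[OF meas] by simp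
    also have "\<dots> = (\<integral>x. indicator S x * F x \<partial>lebesgue)"
    proof (rule integral_cong_AE)
      show "(\<lambda>x. indicator S x * g x) \<in> borel_measurable lebesgue"
        using measurable_completion[OF meas] by simp
      have "indicator S \<in> borel_measurable lebesgue"
        using S by (intro measurable_completion borel_measurable_indicator) simp
      then show "(\<lambda>x. indicator S x * F x) \<in> borel_measurable lebesgue"
        using borel_measurable_integrable[OF F] by (rule borel_measurable_times)
      show "AE x in lebesgue. indicator S x * g x = indicator S x * F x"
        using Fg by (rule AE_mp) (intro AE_I2, simp)
    qed
    finally show ?thesis .
  qed
  with g Fg show ?thesis using that by blast
qed

lemma AE_on_open_if_AE_on_boxes:
  fixes \<Omega> :: "'a::euclidean_space set"
  assumes \<Omega>: "open \<Omega>"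
    and boxes: "\<And>a b. closure (box a b) \<subseteq> \<Omega> \<Longrightarrow> AE x in lebesgue. x \<in> box a b \<longrightarrow> P x"
  shows "AE x in lebesgue_on \<Omega>. P x"
proof -
  define rbox :: "('a \<Rightarrow> real \<times> real) \<Rightarrow> 'a set"
    where "rbox p = box (\<Sum>i\<in>Basis. fst (p i) *\<^sub>R i) (\<Sum>i\<in>Basis. snd (p i) *\<^sub>R i)" for p
  define I where "I = {p \<in> Basis \<rightarrow>\<^sub>E \<rat> \<times> \<rat>. closure (rbox p) \<subseteq> \<Omega>}"
  have "countable I"
  proof -
    have "countable (Basis \<rightarrow>\<^sub>E (\<rat> \<times> \<rat>) :: ('a \<Rightarrow> real \<times> real) set)"
      by (intro countable_PiE finite_Basis countable_SIGMA countable_rat)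
    then show ?thesis unfolding I_def by (rule countable_subset[rotated]) auto
  qed
  moreover have "AE x in lebesgue. x \<in> rbox p \<longrightarrow> P x" if "p \<in> I" for p
    using that unfolding I_def rbox_def by (intro boxes) simp
  ultimately have "AE x in lebesgue. \<forall>p\<in>I. x \<in> rbox p \<longrightarrow> P x"
    by (rule AE_ball_countable'[rotated])
  then have "AE x in lebesgue. x \<in> \<Omega> \<longrightarrow> P x"
  proof (rule AE_mp, intro AE_I2 impI)
    fix x assume P: "\<forall>p\<in>I. x \<in> rbox p \<longrightarrow> P x" and x: "x \<in> \<Omega>"
    obtain p where "p \<in> Basis \<rightarrow>\<^sub>E \<rat> \<times> \<rat>" "closure (rbox p) \<subseteq> \<Omega>" "x \<in> rbox p"
      unfolding rbox_def by (rule open_rational_box_cover[OF \<Omega> x])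
    then show "P x" using P unfolding I_def by blast
  qed
  then show ?thesis using \<Omega> by (subst AE_restrict_space_iff) (auto simp: borel_open)
qed

lemma AE_eq_0_if_box_integrals_eq_0:
  fixes f :: "'a::euclidean_space \<Rightarrow> real"
  assumes \<Omega>: "open \<Omega>" and f: "integrable (lebesgue_on \<Omega>) f"
    and box_integrals: "\<And>a b. closure (box a b) \<subseteq> \<Omega> \<Longrightarrow>
      integral\<^sup>L (lebesgue_on \<Omega>) (\<lambda>x. indicator (box a b) x * f x) = 0"
  shows "AE x in lebesgue_on \<Omega>. f x = 0"
proof (rule AE_on_open_if_AE_on_boxes[OF \<Omega>])
  have \<Omega>_sets: "\<Omega> \<in> sets lebesgue" using \<Omega> by (simp add: borel_open)
  define F where "F x = indicator \<Omega> x * f x" for x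
  have F_int: "integrable lebesgue F"
    unfolding F_def using integrable_restrict_space[of \<Omega> lebesgue f] \<Omega>_sets f by simp
  obtain g where g: "integrable lborel g" and Fg: "AE x in lebesgue. F x = g x"
    and g_integrals: "\<And>S. S \<in> sets borel \<Longrightarrow>
      (\<integral>x. indicator S x * g x \<partial>lborel) = (\<integral>x. indicator S x * F x \<partial>lebesgue)"
    using integrable_lebesgue_borel_representative[OF F_int] by metis
  have F_integrals: "(\<integral>x. indicator S x * F x \<partial>lebesgue)
      = integral\<^sup>L (lebesgue_on \<Omega>) (\<lambda>x. indicator S x * f x)" for S
    using integral_restrict_space[of \<Omega> lebesgue "\<lambda>x. indicator S x * f x"] \<Omega>_sets
    by (simp add: F_def mult.left_commute)
  fix a b assume ab: "closure (box a b) \<subseteq> \<Omega>"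
  have "AE x in lborel. x \<in> box a b \<longrightarrow> g x = 0"
  proof (rule AE_eq_0_on_if_box_integrals_eq_0[OF g])
    fix c d
    obtain c' d' where cd: "box c d \<inter> box a b = box c' d'"
      using box_Int_box[of c d a b] by blast
    have "closure (box c' d') \<subseteq> \<Omega>"
      using closure_mono[of "box c' d'" "box a b"] cd ab by auto
    then show "(\<integral>x. indicator (box c d \<inter> box a b) x * g x \<partial>lborel) = 0"
      using g_integrals[of "box c' d'"] F_integrals[of "box c' d'"] box_integrals[of c' d'] cd by simp
  qed simp
  then have "AE x in lebesgue. x \<in> box a b \<longrightarrow> g x = 0" by (rule AE_completion)
  then show "AE x in lebesgue. x \<in> box a b \<longrightarrow> f x = 0"
    using Fg
  proof (rule AE_mp[OF _ AE_mp], intro AE_I2 impI)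
    fix x assume "F x = g x" "x \<in> box a b \<longrightarrow> g x = 0" "x \<in> box a b"
    moreover have "box a b \<subseteq> \<Omega>" using ab closure_subset by blast
    ultimately show "f x = 0" by (auto simp: F_def)
  qed
qed

lemma AE_eq_0_if_orthogonal_to_test_functions:
  fixes f :: "'a::euclidean_space \<Rightarrow> real"
  assumes "open \<Omega>" "integrable (lebesgue_on \<Omega>) f"
    and "\<And>\<phi> D. C1_with \<phi> D \<Longrightarrow> compact (tsupp \<phi>) \<Longrightarrow> tsupp \<phi> \<subseteq> \<Omega> \<Longrightarrow>
           integral\<^sup>L (lebesgue_on \<Omega>) (\<lambda>x. \<phi> x * f x) = 0"
  shows "AE x in lebesgue_on \<Omega>. f x = 0"
  using assms
  by (intro AE_eq_0_if_box_integrals_eq_0 integral_indicator_box_eq_0_if_orthogonal_to_test_functions)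

section \<open>Weak gradients\<close>

lemma weak_partial_add_scaleR:
  fixes u w g k :: "'a::euclidean_space \<Rightarrow> 'b::euclidean_space"
  assumes \<Omega>: "open \<Omega>" "bounded \<Omega>"
    and L2: "L2 \<Omega> u" "L2 \<Omega> w" "L2 \<Omega> g" "L2 \<Omega> k"
    and "weak_partial \<Omega> u b g" "weak_partial \<Omega> w b k"
  shows "weak_partial \<Omega> (\<lambda>x. u x + c *\<^sub>R w x) b (\<lambda>x. g x + c *\<^sub>R k x)"
  unfolding weak_partial_def
proof (intro allI impI)
  fix \<phi> :: "'a \<Rightarrow> real" and D
  assume \<phi>: "C1_with \<phi> D \<and> compact (tsupp \<phi>) \<and> tsupp \<phi> \<subseteq> \<Omega>"
  note integrable = integrable_test_function_scaleR_L2[OF \<Omega>, of \<phi> D]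
  have u: "integral\<^sup>L (lebesgue_on \<Omega>) (\<lambda>x. D x b *\<^sub>R u x)
      = - integral\<^sup>L (lebesgue_on \<Omega>) (\<lambda>x. \<phi> x *\<^sub>R g x)"
    and w: "integral\<^sup>L (lebesgue_on \<Omega>) (\<lambda>x. D x b *\<^sub>R w x)
      = - integral\<^sup>L (lebesgue_on \<Omega>) (\<lambda>x. \<phi> x *\<^sub>R k x)"
    using assms(7,8) \<phi> unfolding weak_partial_def by blast+
  have "integral\<^sup>L (lebesgue_on \<Omega>) (\<lambda>x. D x b *\<^sub>R (u x + c *\<^sub>R w x))
      = integral\<^sup>L (lebesgue_on \<Omega>) (\<lambda>x. D x b *\<^sub>R u x + c *\<^sub>R (D x b *\<^sub>R w x))"
    by (simp add: scaleR_add_right mult.commute)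
  also have "\<dots> = integral\<^sup>L (lebesgue_on \<Omega>) (\<lambda>x. D x b *\<^sub>R u x)
      + c *\<^sub>R integral\<^sup>L (lebesgue_on \<Omega>) (\<lambda>x. D x b *\<^sub>R w x)"
    using integrable(2)[OF _ _ L2(1)] integrable(2)[OF _ _ L2(2)] \<phi>
    by (simp only: Bochner_Integration.integral_add integrable_scaleR_right integral_scaleR_right)
  also have "\<dots> = - (integral\<^sup>L (lebesgue_on \<Omega>) (\<lambda>x. \<phi> x *\<^sub>R g x)
      + c *\<^sub>R integral\<^sup>L (lebesgue_on \<Omega>) (\<lambda>x. \<phi> x *\<^sub>R k x))"
    by (simp add: u w)
  also have "integral\<^sup>L (lebesgue_on \<Omega>) (\<lambda>x. \<phi> x *\<^sub>R g x)
      + c *\<^sub>R integral\<^sup>L (lebesgue_on \<Omega>) (\<lambda>x. \<phi> x *\<^sub>R k x)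
      = integral\<^sup>L (lebesgue_on \<Omega>) (\<lambda>x. \<phi> x *\<^sub>R g x + c *\<^sub>R (\<phi> x *\<^sub>R k x))"
    using integrable(1)[OF _ _ L2(3)] integrable(1)[OF _ _ L2(4)] \<phi>
    by (simp only: Bochner_Integration.integral_add integrable_scaleR_right integral_scaleR_right)
  also have "\<dots> = integral\<^sup>L (lebesgue_on \<Omega>) (\<lambda>x. \<phi> x *\<^sub>R (g x + c *\<^sub>R k x))"
    by (simp add: scaleR_add_right mult.commute)
  finally show "integral\<^sup>L (lebesgue_on \<Omega>) (\<lambda>x. D x b *\<^sub>R (u x + c *\<^sub>R w x)) =
      - integral\<^sup>L (lebesgue_on \<Omega>) (\<lambda>x. \<phi> x *\<^sub>R (g x + c *\<^sub>R k x))" .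
qed

lemma weak_partial_unique:
  fixes g g' :: "'a::euclidean_space \<Rightarrow> 'b::euclidean_space"
  assumes \<Omega>: "open \<Omega>" "bounded \<Omega>" and L2: "L2 \<Omega> g" "L2 \<Omega> g'"
    and "weak_partial \<Omega> u b g" "weak_partial \<Omega> u b g'"
  shows "AE x in lebesgue_on \<Omega>. g x = g' x"
proof -
  have \<Omega>_sets: "\<Omega> \<in> sets lebesgue" using \<Omega>(1) by (simp add: borel_open)
  have "integrable (lebesgue_on \<Omega>) g" "integrable (lebesgue_on \<Omega>) g'"
    using L2_integrable_scaleR_bounded[OF \<Omega>(2) \<Omega>_sets, of _ "\<lambda>_. 1" 1] L2 by simp_all
  then have integrable_component: "integrable (lebesgue_on \<Omega>) (\<lambda>x. (g x - g' x) \<bullet> j)" for j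
    by (intro integrable_inner_left Bochner_Integration.integrable_diff)
  have "AE x in lebesgue_on \<Omega>. (g x - g' x) \<bullet> j = 0" for j
  proof (rule AE_eq_0_if_orthogonal_to_test_functions[OF \<Omega>(1) integrable_component])
    fix \<phi> :: "'a \<Rightarrow> real" and D
    assume \<phi>: "C1_with \<phi> D" "compact (tsupp \<phi>)" "tsupp \<phi> \<subseteq> \<Omega>"
    have int: "integrable (lebesgue_on \<Omega>) (\<lambda>x. \<phi> x *\<^sub>R g x)"
      "integrable (lebesgue_on \<Omega>) (\<lambda>x. \<phi> x *\<^sub>R g' x)"
      using integrable_test_function_scaleR_L2(1)[OF \<Omega> \<phi>(1,2)] L2 by blast+
    have "integral\<^sup>L (lebesgue_on \<Omega>) (\<lambda>x. D x b *\<^sub>R u x)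
        = - integral\<^sup>L (lebesgue_on \<Omega>) (\<lambda>x. \<phi> x *\<^sub>R g x)"
      "integral\<^sup>L (lebesgue_on \<Omega>) (\<lambda>x. D x b *\<^sub>R u x)
        = - integral\<^sup>L (lebesgue_on \<Omega>) (\<lambda>x. \<phi> x *\<^sub>R g' x)"
      using assms(5,6) \<phi> unfolding weak_partial_def by blast+
    then have "integral\<^sup>L (lebesgue_on \<Omega>) (\<lambda>x. \<phi> x *\<^sub>R g x)
        = integral\<^sup>L (lebesgue_on \<Omega>) (\<lambda>x. \<phi> x *\<^sub>R g' x)"
      by simp
    then have "integral\<^sup>L (lebesgue_on \<Omega>) (\<lambda>x. (\<phi> x *\<^sub>R g x - \<phi> x *\<^sub>R g' x) \<bullet> j) = 0"
      using int by (simp add: integral_inner_left)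
    then show "integral\<^sup>L (lebesgue_on \<Omega>) (\<lambda>x. \<phi> x * ((g x - g' x) \<bullet> j)) = 0"
      by (simp add: inner_diff_left algebra_simps)
  qed
  then have "AE x in lebesgue_on \<Omega>. \<forall>j\<in>Basis. (g x - g' x) \<bullet> j = 0"
    by (intro AE_finite_allI) simp_all
  then show ?thesis
    by (rule AE_mp) (intro AE_I2 impI, simp add: euclidean_all_zero_iff)
qed

lemma H1_wgrad:
  assumes "H1 \<Omega> u" "b \<in> Basis"
  shows "L2 \<Omega> (wgrad \<Omega> u b)" "weak_partial \<Omega> u b (wgrad \<Omega> u b)"
proof -
  have "\<exists>g. L2 \<Omega> g \<and> weak_partial \<Omega> u b g" using assms unfolding H1_def by blast
  then have "L2 \<Omega> (wgrad \<Omega> u b) \<and> weak_partial \<Omega> u b (wgrad \<Omega> u b)"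
    unfolding wgrad_def by (rule someI_ex)
  then show "L2 \<Omega> (wgrad \<Omega> u b)" "weak_partial \<Omega> u b (wgrad \<Omega> u b)" by simp_all
qed

lemma H1_imp_L2: "H1 \<Omega> u \<Longrightarrow> L2 \<Omega> u"
  unfolding H1_def by simp

lemma weak_partial_add_scaleR_wgrad:
  fixes u w :: "'a::euclidean_space \<Rightarrow> 'b::euclidean_space"
  assumes "open \<Omega>" "bounded \<Omega>" "H1 \<Omega> u" "H1 \<Omega> w" "b \<in> Basis"
  shows "weak_partial \<Omega> (\<lambda>x. u x + c *\<^sub>R w x) b (\<lambda>x. wgrad \<Omega> u b x + c *\<^sub>R wgrad \<Omega> w b x)"
  using assms by (intro weak_partial_add_scaleR H1_wgrad H1_imp_L2)

lemma H1_add_scaleR: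
  fixes u w :: "'a::euclidean_space \<Rightarrow> 'b::euclidean_space"
  assumes "open \<Omega>" "bounded \<Omega>" "H1 \<Omega> u" "H1 \<Omega> w"
  shows "H1 \<Omega> (\<lambda>x. u x + c *\<^sub>R w x)"
  unfolding H1_def
proof (intro conjI ballI)
  show "L2 \<Omega> (\<lambda>x. u x + c *\<^sub>R w x)" using assms by (intro L2_add_scaleR H1_imp_L2)
  fix b :: 'a assume b: "b \<in> Basis"
  show "\<exists>g. L2 \<Omega> g \<and> weak_partial \<Omega> (\<lambda>x. u x + c *\<^sub>R w x) b g"
    using assms b weak_partial_add_scaleR_wgrad[OF assms b]
    by (intro exI[of _ "\<lambda>x. wgrad \<Omega> u b x + c *\<^sub>R wgrad \<Omega> w b x"] conjI L2_add_scaleR H1_wgrad)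
qed

lemma wgrad_add_scaleR:
  fixes u w :: "'a::euclidean_space \<Rightarrow> 'b::euclidean_space"
  assumes "open \<Omega>" "bounded \<Omega>" "H1 \<Omega> u" "H1 \<Omega> w" "b \<in> Basis"
  shows "AE x in lebesgue_on \<Omega>. wgrad \<Omega> (\<lambda>x. u x + c *\<^sub>R w x) b x = wgrad \<Omega> u b x + c *\<^sub>R wgrad \<Omega> w b x"
proof (rule weak_partial_unique[OF assms(1,2)])
  show "L2 \<Omega> (wgrad \<Omega> (\<lambda>x. u x + c *\<^sub>R w x) b)"
    "weak_partial \<Omega> (\<lambda>x. u x + c *\<^sub>R w x) b (wgrad \<Omega> (\<lambda>x. u x + c *\<^sub>R w x) b)"
    using H1_wgrad[OF H1_add_scaleR[OF assms(1-4)] assms(5)] by simp_all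
  show "L2 \<Omega> (\<lambda>x. wgrad \<Omega> u b x + c *\<^sub>R wgrad \<Omega> w b x)"
    using assms by (intro L2_add_scaleR H1_wgrad)
qed (rule weak_partial_add_scaleR_wgrad[OF assms])

lemma gradinner_commute: "gradinner \<Omega> u v = gradinner \<Omega> v u"
  unfolding gradinner_def by (simp add: l2inner_commute)

lemma gradnorm2_nonneg: "0 \<le> gradnorm2 \<Omega> u"
  unfolding gradnorm2_def gradinner_def by (intro sum_nonneg l2inner_self_nonneg)

lemma gradinner_add_scaleR_left:
  fixes u w v :: "'a::euclidean_space \<Rightarrow> 'b::euclidean_space"
  assumes "open \<Omega>" "bounded \<Omega>" "H1 \<Omega> u" "H1 \<Omega> w" "H1 \<Omega> v"
  shows "gradinner \<Omega> (\<lambda>x. u x + c *\<^sub>R w x) v = gradinner \<Omega> u v + c * gradinner \<Omega> w v"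
proof -
  have "l2inner \<Omega> (wgrad \<Omega> (\<lambda>x. u x + c *\<^sub>R w x) b) (wgrad \<Omega> v b)
      = l2inner \<Omega> (wgrad \<Omega> u b) (wgrad \<Omega> v b) + c * l2inner \<Omega> (wgrad \<Omega> w b) (wgrad \<Omega> v b)"
    if b: "b \<in> Basis" for b
  proof -
    have "l2inner \<Omega> (wgrad \<Omega> (\<lambda>x. u x + c *\<^sub>R w x) b) (wgrad \<Omega> v b)
        = l2inner \<Omega> (\<lambda>x. wgrad \<Omega> u b x + c *\<^sub>R wgrad \<Omega> w b x) (wgrad \<Omega> v b)"
      using assms b H1_add_scaleR[OF assms(1-4)] wgrad_add_scaleR[OF assms(1-4) b]
      by (intro l2inner_cong_AE_left L2_add_scaleR H1_wgrad)
    also have "\<dots> = l2inner \<Omega> (wgrad \<Omega> u b) (wgrad \<Omega> v b) + c * l2inner \<Omega> (wgrad \<Omega> w b) (wgrad \<Omega> v b)"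
      using assms b by (intro l2inner_add_scaleR_left H1_wgrad)
    finally show ?thesis .
  qed
  then show ?thesis
    unfolding gradinner_def by (simp add: sum.distrib sum_distrib_left)
qed

lemma gradnorm2_add_scaleR:
  fixes u w :: "'a::euclidean_space \<Rightarrow> 'b::euclidean_space"
  assumes "open \<Omega>" "bounded \<Omega>" "H1 \<Omega> u" "H1 \<Omega> w"
  shows "gradnorm2 \<Omega> (\<lambda>x. u x + c *\<^sub>R w x)
    = gradnorm2 \<Omega> u + 2 * c * gradinner \<Omega> u w + c\<^sup>2 * gradnorm2 \<Omega> w"
proof -
  have "gradnorm2 \<Omega> (\<lambda>x. u x + c *\<^sub>R w x)
      = gradinner \<Omega> u (\<lambda>x. u x + c *\<^sub>R w x) + c * gradinner \<Omega> w (\<lambda>x. u x + c *\<^sub>R w x)"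
    unfolding gradnorm2_def using assms H1_add_scaleR[OF assms] by (rule gradinner_add_scaleR_left)
  also have "\<dots> = gradinner \<Omega> (\<lambda>x. u x + c *\<^sub>R w x) u + c * gradinner \<Omega> (\<lambda>x. u x + c *\<^sub>R w x) w"
    by (simp only: gradinner_commute)
  also have "gradinner \<Omega> (\<lambda>x. u x + c *\<^sub>R w x) u = gradnorm2 \<Omega> u + c * gradinner \<Omega> u w"
    unfolding gradnorm2_def gradinner_commute[of \<Omega> u w]
    using assms assms(3) by (rule gradinner_add_scaleR_left)
  also have "gradinner \<Omega> (\<lambda>x. u x + c *\<^sub>R w x) w = gradinner \<Omega> u w + c * gradnorm2 \<Omega> w"
    unfolding gradnorm2_def using assms assms(4) by (rule gradinner_add_scaleR_left)
  finally show ?thesis by (simp add: power2_eq_square algebra_simps)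
qed

section \<open>The tangent-plane step\<close>

lemma tangent_step_energy_identities:
  fixes u d :: "'a::euclidean_space \<Rightarrow> 'b::euclidean_space"
  assumes \<Omega>: "open \<Omega>" "bounded \<Omega>" and H1: "H1 \<Omega> u" "H1 \<Omega> d"
    and euler_lagrange: "p + gradinner \<Omega> (\<lambda>x. u x + \<tau> *\<^sub>R d x) d = 0"
  shows "gradnorm2 \<Omega> (\<lambda>x. u x + \<tau> *\<^sub>R d x) + 2 * \<tau> * p + \<tau>\<^sup>2 * gradnorm2 \<Omega> d = gradnorm2 \<Omega> u"
    and "Gnorm2 \<Omega> (\<lambda>x. u x + \<tau> *\<^sub>R d x) u + 3/2 * \<tau> * p + 1/4 * \<tau>\<^sup>2 * gradnorm2 \<Omega> d
      = 1/2 * gradnorm2 \<Omega> u"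
proof -
  have "p + gradinner \<Omega> u d + \<tau> * gradnorm2 \<Omega> d = 0"
    using euler_lagrange gradinner_add_scaleR_left[OF \<Omega> H1 H1(2)] by (simp add: gradnorm2_def)
  then have "\<tau> * (p + gradinner \<Omega> u d + \<tau> * gradnorm2 \<Omega> d) = 0" by simp
  then have p: "\<tau> * p = - \<tau> * gradinner \<Omega> u d - \<tau>\<^sup>2 * gradnorm2 \<Omega> d"
    by (simp add: power2_eq_square algebra_simps)
  have inner: "gradinner \<Omega> (\<lambda>x. u x + \<tau> *\<^sub>R d x) u = gradnorm2 \<Omega> u + \<tau> * gradinner \<Omega> u d"
    using gradinner_add_scaleR_left[OF \<Omega> H1 H1(1)] by (simp add: gradnorm2_def gradinner_commute)
  show "gradnorm2 \<Omega> (\<lambda>x. u x + \<tau> *\<^sub>R d x) + 2 * \<tau> * p + \<tau>\<^sup>2 * gradnorm2 \<Omega> d = gradnorm2 \<Omega> u"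
    using p by (simp add: gradnorm2_add_scaleR[OF \<Omega> H1] algebra_simps)
  show "Gnorm2 \<Omega> (\<lambda>x. u x + \<tau> *\<^sub>R d x) u + 3/2 * \<tau> * p + 1/4 * \<tau>\<^sup>2 * gradnorm2 \<Omega> d
      = 1/2 * gradnorm2 \<Omega> u"
    using p by (simp add: Gnorm2_def gradnorm2_add_scaleR[OF \<Omega> H1] inner algebra_simps)
qed

lemma integral_abs_norm_sq_tangent_step:
  fixes u d :: "'a::euclidean_space \<Rightarrow> 'b::euclidean_space"
  assumes L2: "L2 \<Omega> u" "L2 \<Omega> d"
    and unit: "AE x in lebesgue_on \<Omega>. (norm (u x))\<^sup>2 = 1"
    and tangent: "AE x in lebesgue_on \<Omega>. d x \<bullet> u x = 0"
  shows "integral\<^sup>L (lebesgue_on \<Omega>) (\<lambda>x. \<bar>(norm (u x + \<tau> *\<^sub>R d x))\<^sup>2 - 1\<bar>) = \<tau>\<^sup>2 * (l2norm \<Omega> d)\<^sup>2"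
proof -
  have pointwise: "AE x in lebesgue_on \<Omega>. \<bar>(norm (u x + \<tau> *\<^sub>R d x))\<^sup>2 - 1\<bar> = \<tau>\<^sup>2 * (d x \<bullet> d x)"
    using unit tangent
  proof (rule AE_mp[OF _ AE_mp], intro AE_I2 impI)
    fix x assume unit_x: "(norm (u x))\<^sup>2 = 1" and tangent_x: "d x \<bullet> u x = 0"
    have "(norm (u x + \<tau> *\<^sub>R d x))\<^sup>2 = (u x + \<tau> *\<^sub>R d x) \<bullet> (u x + \<tau> *\<^sub>R d x)"
      by (simp add: power2_norm_eq_inner)
    also have "\<dots> = u x \<bullet> u x + 2 * \<tau> * (d x \<bullet> u x) + \<tau>\<^sup>2 * (d x \<bullet> d x)"
      by (simp add: inner_add_left inner_add_right inner_commute power2_eq_square algebra_simps)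
    also have "u x \<bullet> u x = 1" using unit_x by (simp add: power2_norm_eq_inner)
    finally have "(norm (u x + \<tau> *\<^sub>R d x))\<^sup>2 = 1 + \<tau>\<^sup>2 * (d x \<bullet> d x)"
      using tangent_x by simp
    then show "\<bar>(norm (u x + \<tau> *\<^sub>R d x))\<^sup>2 - 1\<bar> = \<tau>\<^sup>2 * (d x \<bullet> d x)" by simp
  qed
  have u_meas: "u \<in> borel_measurable (lebesgue_on \<Omega>)" and d_meas: "d \<in> borel_measurable (lebesgue_on \<Omega>)"
    using L2 unfolding L2_def by simp_all
  have "integral\<^sup>L (lebesgue_on \<Omega>) (\<lambda>x. \<bar>(norm (u x + \<tau> *\<^sub>R d x))\<^sup>2 - 1\<bar>)
      = integral\<^sup>L (lebesgue_on \<Omega>) (\<lambda>x. \<tau>\<^sup>2 * (d x \<bullet> d x))"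
  proof (rule integral_cong_AE[OF _ _ pointwise])
    show "(\<lambda>x. \<bar>(norm (u x + \<tau> *\<^sub>R d x))\<^sup>2 - 1\<bar>) \<in> borel_measurable (lebesgue_on \<Omega>)"
      using u_meas d_meas by measurable
    show "(\<lambda>x. \<tau>\<^sup>2 * (d x \<bullet> d x)) \<in> borel_measurable (lebesgue_on \<Omega>)"
      using d_meas by measurable
  qed
  also have "\<dots> = \<tau>\<^sup>2 * (l2norm \<Omega> d)\<^sup>2"
    using l2inner_self_nonneg[of \<Omega> d] by (simp add: l2norm_def l2inner_def)
  finally show ?thesis .
qed

theorem proposition3p1:
  fixes \<Omega> \<Gamma>D :: "'a::euclidean_space set"
    and ip :: "('a \<Rightarrow> real^'l) \<Rightarrow> ('a \<Rightarrow> real^'l) \<Rightarrow> real"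
    and cstar :: real
  assumes dom: "lipschitz_domain \<Omega>" and bdd: "bounded \<Omega>"
    and GD: "\<Gamma>D \<subseteq> frontier \<Omega>" and GDpos: "surface_measure \<Gamma>D > 0"
    and ip: "inner_product_on \<Omega> (H1D \<Omega> \<Gamma>D) ip"
    and cstar: "0 \<le> cstar"
    and poinc: "\<forall>v\<in>H1D \<Omega> \<Gamma>D. l2norm \<Omega> v \<le> sqrt cstar * sqrt (ip v v)"
  shows "\<exists>cG>0. \<forall>(\<tau>::real) (u0::'a \<Rightarrow> real^'l) dtu1.
           \<tau> > 0 \<and> H1 \<Omega> u0 \<and> (AE x in lebesgue_on \<Omega>. (norm (u0 x))\<^sup>2 = 1) \<and>
           dtu1 \<in> H1D \<Omega> \<Gamma>D \<and> (AE x in lebesgue_on \<Omega>. dtu1 x \<bullet> u0 x = 0) \<and>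
           (\<forall>v\<in>H1D \<Omega> \<Gamma>D. (AE x in lebesgue_on \<Omega>. v x \<bullet> u0 x = 0) \<longrightarrow>
              ip dtu1 v + gradinner \<Omega> (\<lambda>x. u0 x + \<tau> *\<^sub>R dtu1 x) v = 0)
           \<longrightarrow>
           (let u1 = (\<lambda>x. u0 x + \<tau> *\<^sub>R dtu1 x) in
              Gnorm2 \<Omega> u1 u0 \<le> cG * gradnorm2 \<Omega> u0 \<and>
              \<tau> * ip dtu1 dtu1 \<le> 1/2 * gradnorm2 \<Omega> u0 \<and>
              integral\<^sup>L (lebesgue_on \<Omega>) (\<lambda>x. \<bar>(norm (u1 x))\<^sup>2 - 1\<bar>) = \<tau>\<^sup>2 * (l2norm \<Omega> dtu1)\<^sup>2)"
proof (intro exI[of _ "1/2"] conjI allI impI, goal_cases)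
  case 1
  show ?case by simp
next
  case (2 \<tau> u0 d)
  then have \<tau>: "\<tau> > 0" and u0: "H1 \<Omega> u0" "AE x in lebesgue_on \<Omega>. (norm (u0 x))\<^sup>2 = 1"
    and d: "d \<in> H1D \<Omega> \<Gamma>D" "AE x in lebesgue_on \<Omega>. d x \<bullet> u0 x = 0"
    by auto
  have euler_lagrange: "ip d d + gradinner \<Omega> (\<lambda>x. u0 x + \<tau> *\<^sub>R d x) d = 0"
    using 2 d by blast
  have \<Omega>: "open \<Omega>" "bounded \<Omega>" using dom bdd unfolding lipschitz_domain_def by simp_all
  have "H1 \<Omega> d" using d(1) unfolding H1D_def by blast
  note energy = tangent_step_energy_identities[OF \<Omega> u0(1) this euler_lagrange]
  have "0 \<le> ip d d" using ip d(1) unfolding inner_product_on_def by blast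
  then have "0 \<le> \<tau> * ip d d" using \<tau> by simp
  moreover have "0 \<le> \<tau>\<^sup>2 * gradnorm2 \<Omega> d" by (simp add: gradnorm2_nonneg)
  moreover have "0 \<le> gradnorm2 \<Omega> (\<lambda>x. u0 x + \<tau> *\<^sub>R d x)" by (rule gradnorm2_nonneg)
  ultimately show ?case
    unfolding Let_def using energy
    by (intro conjI integral_abs_norm_sq_tangent_step H1_imp_L2 u0 d(2) \<open>H1 \<Omega> d\<close>) linarith+
qed

end
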